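(* Let $\alpha:\{0,1,2,\dots\}\times[0,\infty)\to[0,\infty)$ be nondecreasing (and locally Lipschitz-continuous) in its second argument. Let $(\beta_n)_{n\ge0}$ and $(g_n)_{n\ge0}$ be nonnegative sequences of real numbers, and let $(h_n)_{n\ge0}$, $(\gamma_n)_{n\ge0}$ be real sequences with $h_n>0$ and $0<h_n\gamma_n<1$, such that $$\frac{g_{n+1}-g_n}{h_n}\le -\gamma_n g_n+\alpha(n,g_n)+\beta_n,\qquad n\ge 0,$$ or, equivalently, $g_{n+1}\le g_n(1-h_n\gamma_n)+h_n\alpha(n,g_n)+h_n\beta_n$. If there is a sequence of positive numbers $(\mu_n)_{n\ge 0}$ such that $$\alpha\Big(n,\frac{1}{\mu_n}\Big)+\beta_n\le \frac{1}{\mu_n}\Big(\gamma_n-\frac{\mu_{n+1}-\mu_n}{\mu_n h_n}\Big)\quad\forall n\ge0,\qquad g_0\le \frac{1}{\mu_0},$$ then $$0\le g_n\le \frac{1}{\mu_n},\qquad \forall n\ge 0.$$ Therefore, if $\lim_{n\to\infty}\mu_n=\infty$, then $\lim_{n\to\infty}g_n=0$. *)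

theory Defs
  imports "HOL-Analysis.Analysis"
begin

end

theory Submission
  imports Defs
begin

text \<open>If \<open>g\<^sub>n \<le> 1/\<mu>\<^sub>n\<close>, monotonicity of \<open>\<alpha>\<close> and \<open>h\<^sub>n\<gamma>\<^sub>n \<le> 1\<close> let us replace \<open>g\<^sub>n\<close> by
  \<open>1/\<mu>\<^sub>n\<close> on the right-hand side of the recursion; the condition on \<open>\<mu>\<close> then collapses the
  bound to \<open>1/\<mu>\<^sub>n - (\<mu>\<^sub>n\<^sub>+\<^sub>1 - \<mu>\<^sub>n)/\<mu>\<^sub>n\<^sup>2\<close>, the tangent line of the convex function
  \<open>t \<mapsto> 1/t\<close> at \<open>\<mu>\<^sub>n\<close>, which lies below \<open>1/\<mu>\<^sub>n\<^sub>+\<^sub>1\<close>.\<close>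

lemma inverse_tangent_le:
  fixes a b :: real
  assumes "0 < a" "0 < b"
  shows "1 / a - (b - a) / a\<^sup>2 \<le> 1 / b"
proof -
  have "(2 * a - b) * b \<le> a\<^sup>2"
    using zero_le_power2[of "a - b"] by (simp add: power2_eq_square algebra_simps)
  then show ?thesis
    using assms by (simp add: field_simps power2_eq_square)
qed

lemma discrete_comparison_step:
  fixes A :: "real \<Rightarrow> real" and y y' a b H \<gamma> B :: real
  assumes mono: "mono_on {0..} A"
    and y: "0 \<le> y" "y \<le> 1 / a"
    and pos: "0 < a" "0 < b" "0 < H"
    and H\<gamma>: "H * \<gamma> \<le> 1"
    and rec: "(y' - y) / H \<le> - \<gamma> * y + A y + B"
    and cond: "A (1 / a) + B \<le> (1 / a) * (\<gamma> - (b - a) / (a * H))"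
  shows "y' \<le> 1 / b"
proof -
  have "y' - y \<le> H * (- \<gamma> * y + A y + B)"
    using rec pos by (simp add: pos_divide_le_eq mult.commute)
  then have "y' \<le> y * (1 - H * \<gamma>) + H * (A y + B)"
    by (simp add: algebra_simps)
  also have "\<dots> \<le> (1 / a) * (1 - H * \<gamma>) + H * (A (1 / a) + B)"
  proof -
    have "y * (1 - H * \<gamma>) \<le> (1 / a) * (1 - H * \<gamma>)"
      using y H\<gamma> by (intro mult_right_mono) auto
    moreover have "A y \<le> A (1 / a)"
      using y pos by (intro mono_onD[OF mono]) auto
    ultimately show ?thesis
      using pos by (simp add: add_mono)
  qed
  also have "\<dots> \<le> (1 / a) * (1 - H * \<gamma>) + H * ((1 / a) * (\<gamma> - (b - a) / (a * H)))"
    using mult_left_mono[OF cond less_imp_le[OF pos(3)]] by simp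
  also have "\<dots> = 1 / a - (b - a) / a\<^sup>2"
    using pos by (simp add: field_simps power2_eq_square)
  also have "\<dots> \<le> 1 / b"
    using pos(1,2) by (rule inverse_tangent_le)
  finally show ?thesis .
qed

lemma discrete_comparison_bound:
  fixes \<alpha> :: "nat \<Rightarrow> real \<Rightarrow> real" and \<beta> g h \<gamma> \<mu> :: "nat \<Rightarrow> real"
  assumes mono: "\<And>n. mono_on {0..} (\<alpha> n)"
    and g_nonneg: "\<And>n. 0 \<le> g n"
    and h_pos: "\<And>n. 0 < h n"
    and h\<gamma>: "\<And>n. h n * \<gamma> n \<le> 1"
    and rec: "\<And>n. (g (Suc n) - g n) / h n \<le> - \<gamma> n * g n + \<alpha> n (g n) + \<beta> n"
    and mu_pos: "\<And>n. 0 < \<mu> n"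
    and mu_cond: "\<And>n. \<alpha> n (1 / \<mu> n) + \<beta> n
          \<le> (1 / \<mu> n) * (\<gamma> n - (\<mu> (Suc n) - \<mu> n) / (\<mu> n * h n))"
    and g0: "g 0 \<le> 1 / \<mu> 0"
  shows "g n \<le> 1 / \<mu> n"
proof (induction n)
  case 0
  show ?case using g0 .
next
  case (Suc n)
  show ?case
    by (rule discrete_comparison_step[OF mono g_nonneg Suc.IH mu_pos mu_pos h_pos h\<gamma> rec mu_cond])
qed

theorem theorem3:
  fixes \<alpha> :: "nat \<Rightarrow> real \<Rightarrow> real"
    and \<beta> g h \<gamma> \<mu> :: "nat \<Rightarrow> real"
  assumes alpha_nonneg: "\<And>n x. x \<ge> 0 \<Longrightarrow> \<alpha> n x \<ge> 0"
    and alpha_mono: "\<And>n x y. 0 \<le> x \<Longrightarrow> x \<le> y \<Longrightarrow> \<alpha> n x \<le> \<alpha> n y"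
    and alpha_loclip: "\<And>n x. x \<ge> 0 \<Longrightarrow>
          \<exists>u>0. \<exists>L. L-lipschitz_on (cball x u \<inter> {0..}) (\<alpha> n)"
    and beta_nonneg: "\<And>n. \<beta> n \<ge> 0"
    and g_nonneg: "\<And>n. g n \<ge> 0"
    and h_pos: "\<And>n. h n > 0"
    and hgamma: "\<And>n. 0 < h n * \<gamma> n \<and> h n * \<gamma> n < 1"
    and rec: "\<And>n. (g (Suc n) - g n) / h n \<le> - \<gamma> n * g n + \<alpha> n (g n) + \<beta> n"
    and mu_pos: "\<And>n. \<mu> n > 0"
    and mu_cond: "\<And>n. \<alpha> n (1 / \<mu> n) + \<beta> n
          \<le> (1 / \<mu> n) * (\<gamma> n - (\<mu> (Suc n) - \<mu> n) / (\<mu> n * h n))"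
    and g0: "g 0 \<le> 1 / \<mu> 0"
  shows "(\<forall>n. 0 \<le> g n \<and> g n \<le> 1 / \<mu> n) \<and>
         (filterlim \<mu> at_top sequentially \<longrightarrow> g \<longlonglongrightarrow> 0)"
proof -
  have mono: "mono_on {0..} (\<alpha> n)" for n
    using alpha_mono by (auto intro: mono_onI)
  have h\<gamma>: "h n * \<gamma> n \<le> 1" for n
    using hgamma[of n] by simp
  have bound: "g n \<le> 1 / \<mu> n" for n
    using discrete_comparison_bound[OF mono g_nonneg h_pos h\<gamma> rec mu_pos mu_cond g0] .
  moreover have "g \<longlonglongrightarrow> 0" if "filterlim \<mu> at_top sequentially"
  proof -
    have "(\<lambda>n. 1 / \<mu> n) \<longlonglongrightarrow> 0"
      using tendsto_inverse_0_at_top[OF that] by (simp add: inverse_eq_divide)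
    with g_nonneg bound show ?thesis
      by (intro tendsto_sandwich[where f = "\<lambda>_. 0" and g = g]) auto
  qed
  ultimately show ?thesis
    using g_nonneg by blast
qed

end
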